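(* Let $X_1,\dots,X_n$ be i.i.d. real random variables with a continuous distribution, with order statistics $X_{(1)}\ge\cdots\ge X_{(n)}$ and spacings $S_j:=X_{(j)}-X_{(j+1)}$. Let $\phi(x):=e^x-x-1$ and $\zeta(x):=e^x\phi(-x)=1+(x-1)e^x$. Then for all $\lambda\ge 0$: for $k\in\{1,\dots,n-1\}$, $$\operatorname{Ent}\big[e^{\lambda X_{(k)}}\big]\le k\,\mathbb{E}\big[e^{\lambda X_{(k+1)}}\zeta(\lambda S_k)\big];$$ for $k\in\{2,\dots,n\}$, $$\operatorname{Ent}\big[e^{-\lambda X_{(k)}}\big]\le (n-k+1)\,\mathbb{E}\big[e^{-\lambda X_{(k)}}\phi(-\lambda S_{k-1})\big].$$
   Context: For a non-negative random variable $Y$, $\operatorname{Ent}[Y]:=\mathbb{E}[Y\log Y]-\mathbb{E}[Y]\log\mathbb{E}[Y]$ (not Shannon entropy). Order statistics are sorted decreasingly, $X_{(1)}$ being the maximum. $S_{k-1}=X_{(k-1)}-X_{(k)}$. *)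

theory Defs
  imports "HOL-Probability.Probability"
begin

definition Ent :: "'a measure \<Rightarrow> ('a \<Rightarrow> real) \<Rightarrow> real" where
  "Ent M Y = (\<integral>\<omega>. Y \<omega> * ln (Y \<omega>) \<partial>M) - (\<integral>\<omega>. Y \<omega> \<partial>M) * ln (\<integral>\<omega>. Y \<omega> \<partial>M)"

text \<open>Order statistics of X 1, ..., X n sorted decreasingly: ord_stat n X k is X_(k),
  so ord_stat n X 1 is the maximum (for 1 <= k <= n).\<close>
definition ord_stat :: "nat \<Rightarrow> (nat \<Rightarrow> 'a \<Rightarrow> real) \<Rightarrow> nat \<Rightarrow> 'a \<Rightarrow> real" where
  "ord_stat n X k \<omega> = rev (sort (map (\<lambda>i. X i \<omega>) [1..<n+1])) ! (k - 1)"

definition spacing :: "nat \<Rightarrow> (nat \<Rightarrow> 'a \<Rightarrow> real) \<Rightarrow> nat \<Rightarrow> 'a \<Rightarrow> real" where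
  "spacing n X j \<omega> = ord_stat n X j \<omega> - ord_stat n X (j + 1) \<omega>"

definition phi :: "real \<Rightarrow> real" where
  "phi x = exp x - x - 1"

definition zeta :: "real \<Rightarrow> real" where
  "zeta x = exp x * phi (- x)"

end

(* The entropy of f(X_1, ..., X_n) tensorizes: writing
     psi(a, u) = bregman_xlnx a u = a ln a - a ln u - a + u
   for the Bregman divergence of x ln x, one has Ent f = min_c E psi(f, c), and
   conditioning on all coordinates but one, together with the joint convexity of psi,
   gives  Ent f <= sum_j E psi(f, u_j)  for any positive u_j not depending on X_j.
   For f = exp Z and u_j = exp Z_j this is the modified logarithmic Sobolev inequality
     Ent e^Z <= sum_j E[e^Z phi(Z_j - Z)].
   For Z = lambda X_(k) take Z_j = lambda times the k-th largest of the sample without X_j.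
   It differs from Z only if X_j >= X_(k), and then equals lambda X_(k+1); this happens
   for at most k indices unless X_(k) = X_(k+1), and each such term is
   e^(lambda X_(k+1)) zeta(lambda S_k).  For Z = -lambda X_(k) take Z_j = -lambda times the
   (k-1)-th largest without X_j: it differs from Z only if X_j < X_(k-1), which happens for
   at most n-k+1 indices, each contributing e^(-lambda X_(k)) phi(-lambda S_(k-1)). *)
theory Submission
  imports Defs
begin

section \<open>Entropy and the Bregman divergence of x ln x\<close>

definition bregman_xlnx :: "real \<Rightarrow> real \<Rightarrow> real" where
  "bregman_xlnx a u = a * ln a - a * ln u - a + u"

lemma measurable_bregman_xlnx [measurable]:
  assumes [measurable]: "f \<in> borel_measurable M" "g \<in> borel_measurable M"
  shows "(\<lambda>x. bregman_xlnx (f x) (g x)) \<in> borel_measurable M"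
  unfolding bregman_xlnx_def by measurable

lemma measurable_phi [measurable]:
  assumes [measurable]: "f \<in> borel_measurable M"
  shows "(\<lambda>x. phi (f x)) \<in> borel_measurable M"
  unfolding phi_def by measurable

lemma measurable_zeta [measurable]:
  assumes [measurable]: "f \<in> borel_measurable M"
  shows "(\<lambda>x. zeta (f x)) \<in> borel_measurable M"
  unfolding zeta_def by measurable

lemma phi_0 [simp]: "phi 0 = 0"
  by (simp add: phi_def)

lemma phi_nonneg: "0 \<le> phi x"
  using exp_ge_add_one_self[of x] unfolding phi_def by linarith

lemma zeta_nonneg: "0 \<le> zeta x"
  by (simp add: zeta_def phi_nonneg)

lemma exp_mult_zeta: "exp B * zeta (A - B) = exp A * phi (B - A)"
  by (simp add: zeta_def mult.assoc[symmetric] exp_add[symmetric])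

lemma bregman_xlnx_self [simp]: "bregman_xlnx a a = 0"
  by (simp add: bregman_xlnx_def)

lemma bregman_xlnx_exp: "bregman_xlnx (exp A) (exp B) = exp A * phi (B - A)"
  by (simp add: bregman_xlnx_def phi_def exp_diff field_simps)

lemma bregman_xlnx_ge_tangent:
  fixes a u c :: real
  assumes "0 < a" "0 < u" "0 < c"
  shows "a * ln c + (1 - c) * u \<le> bregman_xlnx a u"
proof -
  have "ln (c * u / a) \<le> c * u / a - 1"
    using assms by (intro ln_le_minus_one) auto
  then have "a * ln (c * u / a) \<le> c * u - a"
    using assms by (simp add: field_simps)
  then show ?thesis
    using assms by (simp add: bregman_xlnx_def ln_div ln_mult algebra_simps)
qed

lemma bregman_xlnx_nonneg: "0 < a \<Longrightarrow> 0 < u \<Longrightarrow> 0 \<le> bregman_xlnx a u"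
  using bregman_xlnx_ge_tangent[of a u 1] by simp

lemma (in prob_space) integral_pos_AE:
  fixes f :: "'a \<Rightarrow> real"
  assumes "integrable M f" "AE x in M. 0 < f x"
  shows "0 < integral\<^sup>L M f"
proof -
  have nonneg: "AE x in M. 0 \<le> f x"
    using assms(2) by eventually_elim simp
  have "integral\<^sup>L M f \<noteq> 0"
  proof
    assume "integral\<^sup>L M f = 0"
    then have "AE x in M. f x = 0"
      using integral_nonneg_eq_0_iff_AE[OF assms(1) nonneg] by simp
    with assms(2) have "AE x in M. False"
      by eventually_elim simp
    then show False
      by simp
  qed
  moreover have "0 \<le> integral\<^sup>L M f"
    using nonneg by (rule integral_nonneg_AE)
  ultimately show ?thesis
    by simp
qed

lemma (in prob_space) integral_bregman_xlnx_const:
  assumes a: "integrable M a" and a_ln: "integrable M (\<lambda>y. a y * ln (a y))"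
  shows "(\<integral>y. bregman_xlnx (a y) c \<partial>M) = Ent M a + bregman_xlnx (integral\<^sup>L M a) c"
proof -
  have "(\<integral>y. bregman_xlnx (a y) c \<partial>M) = (\<integral>y. a y * ln (a y) - a y * (ln c + 1) + c \<partial>M)"
    by (simp add: bregman_xlnx_def algebra_simps)
  also have "\<dots> = (\<integral>y. a y * ln (a y) \<partial>M) - integral\<^sup>L M a * (ln c + 1) + c"
    using a a_ln by (simp add: prob_space)
  finally show ?thesis
    by (simp add: Ent_def bregman_xlnx_def algebra_simps)
qed

lemma (in prob_space) Ent_nonneg:
  assumes a: "integrable M a" "integrable M (\<lambda>y. a y * ln (a y))" and pos: "AE y in M. 0 < a y"
  shows "0 \<le> Ent M a"
proof -
  have mean_pos: "0 < integral\<^sup>L M a"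
    using a(1) pos by (rule integral_pos_AE)
  have "0 \<le> (\<integral>y. bregman_xlnx (a y) (integral\<^sup>L M a) \<partial>M)"
    using pos by (intro integral_nonneg_AE) (auto elim!: eventually_mono intro: bregman_xlnx_nonneg mean_pos)
  then show ?thesis
    using integral_bregman_xlnx_const[OF a] by simp
qed

lemma (in prob_space) Ent_le_integral_bregman_xlnx_const:
  assumes a: "integrable M a" "integrable M (\<lambda>y. a y * ln (a y))" and pos: "AE y in M. 0 < a y"
    and "0 < c"
  shows "Ent M a \<le> (\<integral>y. bregman_xlnx (a y) c \<partial>M)"
  using integral_bregman_xlnx_const[OF a, of c] bregman_xlnx_nonneg[OF integral_pos_AE[OF a(1) pos] \<open>0 < c\<close>]
  by simp

text \<open>Joint convexity of \<open>bregman_xlnx\<close>: integrate the tangent plane at the point of means.\<close>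
lemma (in prob_space) bregman_xlnx_integral_le:
  assumes a: "integrable M a" and u: "integrable M u"
    and pos: "AE y in M. 0 < a y \<and> 0 < u y"
    and breg: "integrable M (\<lambda>y. bregman_xlnx (a y) (u y))"
  shows "bregman_xlnx (integral\<^sup>L M a) (integral\<^sup>L M u) \<le> (\<integral>y. bregman_xlnx (a y) (u y) \<partial>M)"
proof -
  define \<alpha> \<beta> where "\<alpha> = integral\<^sup>L M a" and "\<beta> = integral\<^sup>L M u"
  have "0 < \<alpha>" "0 < \<beta>"
    unfolding \<alpha>_def \<beta>_def using a u pos by (auto intro!: integral_pos_AE elim: eventually_mono)
  then have "bregman_xlnx \<alpha> \<beta> = \<alpha> * ln (\<alpha> / \<beta>) + (1 - \<alpha> / \<beta>) * \<beta>"
    by (simp add: bregman_xlnx_def ln_div field_simps)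
  also have "\<dots> = (\<integral>y. a y * ln (\<alpha> / \<beta>) + (1 - \<alpha> / \<beta>) * u y \<partial>M)"
    using a u by (simp add: \<alpha>_def \<beta>_def)
  also have "\<dots> \<le> (\<integral>y. bregman_xlnx (a y) (u y) \<partial>M)"
  proof (rule integral_mono_AE)
    show "AE y in M. a y * ln (\<alpha> / \<beta>) + (1 - \<alpha> / \<beta>) * u y \<le> bregman_xlnx (a y) (u y)"
      using pos by eventually_elim (simp add: bregman_xlnx_ge_tangent \<open>0 < \<alpha>\<close> \<open>0 < \<beta>\<close>)
  qed (use a u breg in auto)
  finally show ?thesis
    by (simp add: \<alpha>_def \<beta>_def)
qed

section \<open>Tensorization of entropy\<close>

context pair_prob_space
begin

lemma AE_integral_section_pos:
  fixes F :: "'a \<times> 'b \<Rightarrow> real"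
  assumes F: "integrable (M1 \<Otimes>\<^sub>M M2) F" and pos: "AE z in M1 \<Otimes>\<^sub>M M2. 0 < F z"
  shows "AE x in M1. 0 < (\<integral>y. F (x, y) \<partial>M2)"
  using AE_integrable_fst'[OF F] AE_pair[OF pos]
  by eventually_elim (rule M2.integral_pos_AE)

lemma integrable_integral_section_xlnx:
  fixes F :: "'a \<times> 'b \<Rightarrow> real"
  assumes F: "integrable (M1 \<Otimes>\<^sub>M M2) F" and F_ln: "integrable (M1 \<Otimes>\<^sub>M M2) (\<lambda>z. F z * ln (F z))"
    and pos: "AE z in M1 \<Otimes>\<^sub>M M2. 0 < F z"
  shows "integrable M1 (\<lambda>x. (\<integral>y. F (x, y) \<partial>M2) * ln (\<integral>y. F (x, y) \<partial>M2))"
proof -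
  define H where "H x = (\<integral>y. F (x, y) \<partial>M2)" for x
  define G where "G x = (\<integral>y. F (x, y) * ln (F (x, y)) \<partial>M2)" for x
  have H: "integrable M1 H" and G: "integrable M1 G"
    unfolding H_def G_def using integrable_fst'[OF F] integrable_fst'[OF F_ln] by simp_all
  have H_meas [measurable]: "H \<in> borel_measurable M1"
    using H by (rule borel_measurable_integrable)
  have bound: "integrable M1 (\<lambda>x. \<bar>G x\<bar> + \<bar>H x\<bar> + 1)"
    using G H by simp
  have "AE x in M1. norm (H x * ln (H x)) \<le> norm (\<bar>G x\<bar> + \<bar>H x\<bar> + 1)"
    using AE_integrable_fst'[OF F] AE_integrable_fst'[OF F_ln] AE_pair[OF pos] AE_integral_section_pos[OF F pos]
  proof eventually_elim
    case (elim x)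
    then have "H x * ln (H x) \<le> G x"
      using M2.Ent_nonneg[of "\<lambda>y. F (x, y)"] by (simp add: Ent_def H_def G_def)
    moreover have "H x - 1 \<le> H x * ln (H x)"
      using bregman_xlnx_nonneg[of "H x" 1] elim by (simp add: bregman_xlnx_def H_def)
    ultimately show ?case
      by simp
  qed
  then have "integrable M1 (\<lambda>x. H x * ln (H x))"
    by (intro Bochner_Integration.integrable_bound[OF bound]) measurable
  then show ?thesis
    by (simp add: H_def)
qed

lemma Ent_pair_measure:
  fixes F :: "'a \<times> 'b \<Rightarrow> real"
  assumes F: "integrable (M1 \<Otimes>\<^sub>M M2) F" and F_ln: "integrable (M1 \<Otimes>\<^sub>M M2) (\<lambda>z. F z * ln (F z))"
    and H_ln: "integrable M1 (\<lambda>x. (\<integral>y. F (x, y) \<partial>M2) * ln (\<integral>y. F (x, y) \<partial>M2))"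
  shows "Ent (M1 \<Otimes>\<^sub>M M2) F = (\<integral>x. Ent M2 (\<lambda>y. F (x, y)) \<partial>M1) + Ent M1 (\<lambda>x. \<integral>y. F (x, y) \<partial>M2)"
  using integral_fst'[OF F] integral_fst'[OF F_ln] integrable_fst'[OF F_ln] H_ln
  by (simp add: Ent_def)

lemma integral_Ent_section_le:
  fixes F U :: "'a \<times> 'b \<Rightarrow> real"
  assumes F: "integrable (M1 \<Otimes>\<^sub>M M2) F" and F_ln: "integrable (M1 \<Otimes>\<^sub>M M2) (\<lambda>z. F z * ln (F z))"
    and pos: "AE z in M1 \<Otimes>\<^sub>M M2. 0 < F z \<and> 0 < U z"
    and breg: "integrable (M1 \<Otimes>\<^sub>M M2) (\<lambda>z. bregman_xlnx (F z) (U z))"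
    and U_fst: "\<And>x y y'. x \<in> space M1 \<Longrightarrow> y \<in> space M2 \<Longrightarrow> y' \<in> space M2 \<Longrightarrow> U (x, y) = U (x, y')"
  shows "(\<integral>x. Ent M2 (\<lambda>y. F (x, y)) \<partial>M1) \<le> (\<integral>z. bregman_xlnx (F z) (U z) \<partial>(M1 \<Otimes>\<^sub>M M2))"
proof -
  have F_pos: "AE z in M1 \<Otimes>\<^sub>M M2. 0 < F z"
    using pos by eventually_elim simp
  obtain y0 where y0: "y0 \<in> space M2"
    using M2.not_empty by blast
  have "(\<integral>x. Ent M2 (\<lambda>y. F (x, y)) \<partial>M1) \<le> (\<integral>x. (\<integral>y. bregman_xlnx (F (x, y)) (U (x, y)) \<partial>M2) \<partial>M1)"
  proof (rule integral_mono_AE)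
    show "integrable M1 (\<lambda>x. Ent M2 (\<lambda>y. F (x, y)))"
      using integrable_fst'[OF F_ln] integrable_integral_section_xlnx[OF F F_ln F_pos]
      by (simp add: Ent_def)
    show "integrable M1 (\<lambda>x. \<integral>y. bregman_xlnx (F (x, y)) (U (x, y)) \<partial>M2)"
      using integrable_fst'[OF breg] by simp
    show "AE x in M1. Ent M2 (\<lambda>y. F (x, y)) \<le> (\<integral>y. bregman_xlnx (F (x, y)) (U (x, y)) \<partial>M2)"
      using AE_integrable_fst'[OF F] AE_integrable_fst'[OF F_ln] AE_pair[OF pos] AE_space
    proof eventually_elim
      case (elim x)
      then have U_const: "U (x, y) = U (x, y0)" if "y \<in> space M2" for y
        using U_fst y0 that by blast
      then have "AE y in M2. 0 < U (x, y0)"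
        using elim by (auto elim!: eventually_mono)
      then have "0 < U (x, y0)"
        by simp
      then have "Ent M2 (\<lambda>y. F (x, y)) \<le> (\<integral>y. bregman_xlnx (F (x, y)) (U (x, y0)) \<partial>M2)"
        using elim by (intro M2.Ent_le_integral_bregman_xlnx_const) (auto elim: eventually_mono)
      also have "\<dots> = (\<integral>y. bregman_xlnx (F (x, y)) (U (x, y)) \<partial>M2)"
        using U_const by (intro Bochner_Integration.integral_cong) auto
      finally show ?case .
    qed
  qed
  then show ?thesis
    using integral_fst'[OF breg] by simp
qed

lemma Ent_pair_measure_le:
  fixes F U :: "'a \<times> 'b \<Rightarrow> real"
  assumes F: "integrable (M1 \<Otimes>\<^sub>M M2) F" and F_ln: "integrable (M1 \<Otimes>\<^sub>M M2) (\<lambda>z. F z * ln (F z))"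
    and pos: "AE z in M1 \<Otimes>\<^sub>M M2. 0 < F z \<and> 0 < U z"
    and breg: "integrable (M1 \<Otimes>\<^sub>M M2) (\<lambda>z. bregman_xlnx (F z) (U z))"
    and U_fst: "\<And>x y y'. x \<in> space M1 \<Longrightarrow> y \<in> space M2 \<Longrightarrow> y' \<in> space M2 \<Longrightarrow> U (x, y) = U (x, y')"
  shows "Ent (M1 \<Otimes>\<^sub>M M2) F
    \<le> (\<integral>z. bregman_xlnx (F z) (U z) \<partial>(M1 \<Otimes>\<^sub>M M2)) + Ent M1 (\<lambda>x. \<integral>y. F (x, y) \<partial>M2)"
proof -
  have "AE z in M1 \<Otimes>\<^sub>M M2. 0 < F z"
    using pos by eventually_elim simp
  then show ?thesis
    using Ent_pair_measure[OF F F_ln integrable_integral_section_xlnx[OF F F_ln]]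
      integral_Ent_section_le[OF F F_ln pos breg U_fst] by simp
qed

lemma integral_bregman_section_le:
  fixes F U :: "'a \<times> 'b \<Rightarrow> real"
  assumes F: "integrable (M1 \<Otimes>\<^sub>M M2) F" and U: "integrable (M1 \<Otimes>\<^sub>M M2) U"
    and pos: "AE z in M1 \<Otimes>\<^sub>M M2. 0 < F z \<and> 0 < U z"
    and breg: "integrable (M1 \<Otimes>\<^sub>M M2) (\<lambda>z. bregman_xlnx (F z) (U z))"
  shows "integrable M1 (\<lambda>x. bregman_xlnx (\<integral>y. F (x, y) \<partial>M2) (\<integral>y. U (x, y) \<partial>M2))"
    and "(\<integral>x. bregman_xlnx (\<integral>y. F (x, y) \<partial>M2) (\<integral>y. U (x, y) \<partial>M2) \<partial>M1)
           \<le> (\<integral>z. bregman_xlnx (F z) (U z) \<partial>(M1 \<Otimes>\<^sub>M M2))"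
proof -
  define K where "K x = (\<integral>y. bregman_xlnx (F (x, y)) (U (x, y)) \<partial>M2)" for x
  define B where "B = (\<lambda>x. bregman_xlnx (\<integral>y. F (x, y) \<partial>M2) (\<integral>y. U (x, y) \<partial>M2))"
  have K: "integrable M1 K"
    unfolding K_def using integrable_fst'[OF breg] by simp
  have B_meas: "B \<in> borel_measurable M1"
    unfolding B_def using integrable_fst'[OF F] integrable_fst'[OF U] by measurable
  have "AE x in M1. 0 \<le> B x \<and> B x \<le> K x"
    using AE_integrable_fst'[OF F] AE_integrable_fst'[OF U] AE_integrable_fst'[OF breg] AE_pair[OF pos]
  proof eventually_elim
    case (elim x)
    then have "0 < (\<integral>y. F (x, y) \<partial>M2)" "0 < (\<integral>y. U (x, y) \<partial>M2)"
      by (auto intro!: M2.integral_pos_AE elim: eventually_mono)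
    then show ?case
      using elim M2.bregman_xlnx_integral_le[of "\<lambda>y. F (x, y)" "\<lambda>y. U (x, y)"]
      by (simp add: B_def K_def bregman_xlnx_nonneg)
  qed
  then have "AE x in M1. norm (B x) \<le> norm (K x)"
    by eventually_elim simp
  then have B: "integrable M1 B"
    by (intro Bochner_Integration.integrable_bound[OF K B_meas])
  then show "integrable M1 (\<lambda>x. bregman_xlnx (\<integral>y. F (x, y) \<partial>M2) (\<integral>y. U (x, y) \<partial>M2))"
    by (simp add: B_def)
  have "(\<integral>x. B x \<partial>M1) \<le> (\<integral>x. K x \<partial>M1)"
    using \<open>AE x in M1. 0 \<le> B x \<and> B x \<le> K x\<close> by (intro integral_mono_AE B K) (auto elim: eventually_mono)
  then show "(\<integral>x. bregman_xlnx (\<integral>y. F (x, y) \<partial>M2) (\<integral>y. U (x, y) \<partial>M2) \<partial>M1)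
           \<le> (\<integral>z. bregman_xlnx (F z) (U z) \<partial>(M1 \<Otimes>\<^sub>M M2))"
    using integral_fst'[OF breg] by (simp add: B_def K_def)
qed

end

lemma merge_singleton_in_space:
  "x \<in> space (PiM I M) \<Longrightarrow> y \<in> space (PiM {i} M) \<Longrightarrow> merge I {i} (x, y) \<in> space (PiM (insert i I) M)"
  using measurable_space[OF measurable_merge, of "(x, y)" I M "{i}"] by (simp add: space_pair_measure)

lemma merge_singleton_fun_upd:
  assumes "j \<in> I" "x \<in> space (PiM I M)" "y \<in> space (PiM {i} M)" "z \<in> space (M j)"
    and "\<And>w. w \<in> space (PiM (insert i I) M) \<Longrightarrow> g (w(j := z)) = g w"
  shows "g (merge I {i} (x(j := z), y)) = g (merge I {i} (x, y))"
proof -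
  have "merge I {i} (x(j := z), y) = (merge I {i} (x, y))(j := z)"
    using assms(1) by (auto simp: merge_def)
  then show ?thesis
    using assms(5)[OF merge_singleton_in_space[OF assms(2,3)]] by simp
qed

lemma merge_singleton_snd_irrelevant:
  assumes "i \<notin> I" "x \<in> space (PiM I M)" "y \<in> space (PiM {i} M)" "y' \<in> space (PiM {i} M)"
    and "\<And>w z. w \<in> space (PiM (insert i I) M) \<Longrightarrow> z \<in> space (M i) \<Longrightarrow> g (w(i := z)) = g w"
  shows "g (merge I {i} (x, y)) = g (merge I {i} (x, y'))"
proof -
  have "merge I {i} (x, y) = (merge I {i} (x, y'))(i := y i)"
    using assms(1) by (auto simp: merge_def)
  moreover have "y i \<in> space (M i)"
    using assms(3) by (auto simp: space_PiM)
  ultimately show ?thesis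
    using assms(5)[OF merge_singleton_in_space[OF assms(2,4)]] by simp
qed

locale PiM_insert =
  fixes M :: "'i \<Rightarrow> 'a measure" and I :: "'i set" and i :: 'i
  assumes prob_space_M: "\<And>j. j \<in> insert i I \<Longrightarrow> prob_space (M j)"
    and finite_I: "finite I" and i_notin_I: "i \<notin> I"
begin

sublocale pair_prob_space "PiM I M" "PiM {i} M"
proof -
  have "prob_space (PiM I M)" "prob_space (PiM {i} M)"
    using prob_space_M by (auto intro!: prob_space_PiM)
  then show "pair_prob_space (PiM I M) (PiM {i} M)"
    by (simp add: pair_prob_space_def pair_sigma_finite_def prob_space_imp_sigma_finite)
qed

lemma distr_merge_singleton:
  "distr (PiM I M \<Otimes>\<^sub>M PiM {i} M) (PiM (insert i I) M) (merge I {i}) = PiM (insert i I) M"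
proof -
  define M' where "M' j = (if j \<in> insert i I then M j else count_space {undefined})" for j
  interpret prob_space "M' j" for j
    unfolding M'_def using prob_space_M by (auto intro: prob_spaceI)
  interpret M': product_prob_space M' "insert i I"
    by unfold_locales
  have "PiM I M' = PiM I M" "PiM {i} M' = PiM {i} M" "PiM (insert i I) M' = PiM (insert i I) M"
    by (auto intro!: PiM_cong simp: M'_def)
  then show ?thesis
    using M'.distr_merge[of I "{i}"] finite_I i_notin_I by simp
qed

lemma merge_singleton_measurable:
  "merge I {i} \<in> measurable (PiM I M \<Otimes>\<^sub>M PiM {i} M) (PiM (insert i I) M)"
  using measurable_merge[of I "{i}" M] by simp

lemma integrable_merge_singleton:
  fixes g :: "('i \<Rightarrow> 'a) \<Rightarrow> real"
  shows "integrable (PiM (insert i I) M) g \<Longrightarrow> integrable (PiM I M \<Otimes>\<^sub>M PiM {i} M) (\<lambda>z. g (merge I {i} z))"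
  using integrable_distr_eq[OF merge_singleton_measurable, of g] by (simp add: distr_merge_singleton)

lemma integral_merge_singleton:
  fixes g :: "('i \<Rightarrow> 'a) \<Rightarrow> real"
  shows "integrable (PiM (insert i I) M) g
    \<Longrightarrow> (\<integral>z. g (merge I {i} z) \<partial>(PiM I M \<Otimes>\<^sub>M PiM {i} M)) = integral\<^sup>L (PiM (insert i I) M) g"
  using integral_distr[OF merge_singleton_measurable, of g] by (simp add: distr_merge_singleton)

lemma AE_merge_singleton:
  assumes "AE x in PiM (insert i I) M. Q x"
  shows "AE z in PiM I M \<Otimes>\<^sub>M PiM {i} M. Q (merge I {i} z)"
  by (rule AE_distrD[OF merge_singleton_measurable]) (unfold distr_merge_singleton, fact)

definition coord_integral :: "(('i \<Rightarrow> 'a) \<Rightarrow> real) \<Rightarrow> ('i \<Rightarrow> 'a) \<Rightarrow> real" where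
  "coord_integral g x = (\<integral>y. g (merge I {i} (x, y)) \<partial>PiM {i} M)"

lemma coord_integral_xlnx:
  assumes f: "integrable (PiM (insert i I) M) f" "integrable (PiM (insert i I) M) (\<lambda>x. f x * ln (f x))"
    "AE x in PiM (insert i I) M. 0 < f x"
  shows "integrable (PiM I M) (coord_integral f)"
    and "integrable (PiM I M) (\<lambda>x. coord_integral f x * ln (coord_integral f x))"
    and "AE x in PiM I M. 0 < coord_integral f x"
  using integrable_fst'[OF integrable_merge_singleton[OF f(1)]]
    integrable_integral_section_xlnx[OF f(1,2)[THEN integrable_merge_singleton] AE_merge_singleton[OF f(3)]]
    AE_integral_section_pos[OF integrable_merge_singleton[OF f(1)] AE_merge_singleton[OF f(3)]]
  by (simp_all add: coord_integral_def[abs_def])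

lemma Ent_le_coord_integral:
  assumes f: "integrable (PiM (insert i I) M) f" "integrable (PiM (insert i I) M) (\<lambda>x. f x * ln (f x))"
    and pos: "AE x in PiM (insert i I) M. 0 < f x \<and> 0 < u x"
    and breg: "integrable (PiM (insert i I) M) (\<lambda>x. bregman_xlnx (f x) (u x))"
    and u_i: "\<And>x z. x \<in> space (PiM (insert i I) M) \<Longrightarrow> z \<in> space (M i) \<Longrightarrow> u (x(i := z)) = u x"
  shows "Ent (PiM (insert i I) M) f
    \<le> (\<integral>x. bregman_xlnx (f x) (u x) \<partial>PiM (insert i I) M) + Ent (PiM I M) (coord_integral f)"
proof -
  have "u (merge I {i} (x, y)) = u (merge I {i} (x, y'))"
    if "x \<in> space (PiM I M)" "y \<in> space (PiM {i} M)" "y' \<in> space (PiM {i} M)" for x y y'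
    using i_notin_I that u_i by (rule merge_singleton_snd_irrelevant[where g = u])
  note step = Ent_pair_measure_le[OF f[THEN integrable_merge_singleton] AE_merge_singleton[OF pos]
      integrable_merge_singleton[OF breg] this]
  have Ent_f: "Ent (PiM I M \<Otimes>\<^sub>M PiM {i} M) (\<lambda>z. f (merge I {i} z)) = Ent (PiM (insert i I) M) f"
    using f[THEN integral_merge_singleton] by (simp add: Ent_def)
  have coord_f: "(\<lambda>x. \<integral>y. f (merge I {i} (x, y)) \<partial>PiM {i} M) = coord_integral f"
    by (simp add: fun_eq_iff coord_integral_def)
  show ?thesis
    using step unfolding Ent_f coord_f integral_merge_singleton[OF breg] .
qed

lemma coord_integral_bregman:
  assumes f: "integrable (PiM (insert i I) M) f" and u: "integrable (PiM (insert i I) M) u"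
    and pos: "AE x in PiM (insert i I) M. 0 < f x \<and> 0 < u x"
    and breg: "integrable (PiM (insert i I) M) (\<lambda>x. bregman_xlnx (f x) (u x))"
  shows "integrable (PiM I M) (coord_integral u)"
    and "AE x in PiM I M. 0 < coord_integral u x"
    and "integrable (PiM I M) (\<lambda>x. bregman_xlnx (coord_integral f x) (coord_integral u x))"
    and "(\<integral>x. bregman_xlnx (coord_integral f x) (coord_integral u x) \<partial>PiM I M)
           \<le> (\<integral>x. bregman_xlnx (f x) (u x) \<partial>PiM (insert i I) M)"
proof -
  have u_pos: "AE x in PiM (insert i I) M. 0 < u x"
    using pos by eventually_elim simp
  note fibres = integral_bregman_section_le[OF integrable_merge_singleton[OF f] integrable_merge_singleton[OF u]
      AE_merge_singleton[OF pos] integrable_merge_singleton[OF breg]]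
  show "integrable (PiM I M) (coord_integral u)"
    using integrable_fst'[OF integrable_merge_singleton[OF u]] by (simp add: coord_integral_def[abs_def])
  show "AE x in PiM I M. 0 < coord_integral u x"
    using AE_integral_section_pos[OF integrable_merge_singleton[OF u] AE_merge_singleton[OF u_pos]]
    by (simp add: coord_integral_def)
  show "integrable (PiM I M) (\<lambda>x. bregman_xlnx (coord_integral f x) (coord_integral u x))"
    using fibres(1) by (simp add: coord_integral_def)
  show "(\<integral>x. bregman_xlnx (coord_integral f x) (coord_integral u x) \<partial>PiM I M)
      \<le> (\<integral>x. bregman_xlnx (f x) (u x) \<partial>PiM (insert i I) M)"
    using fibres(2) integral_merge_singleton[OF breg] by (simp add: coord_integral_def)
qed

lemma coord_integral_fun_upd:
  assumes "j \<in> I" "x \<in> space (PiM I M)" "z \<in> space (M j)"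
    and "\<And>w. w \<in> space (PiM (insert i I) M) \<Longrightarrow> g (w(j := z)) = g w"
  shows "coord_integral g (x(j := z)) = coord_integral g x"
  unfolding coord_integral_def
proof (rule Bochner_Integration.integral_cong[OF refl])
  fix y assume "y \<in> space (PiM {i} M)"
  then show "g (merge I {i} (x(j := z), y)) = g (merge I {i} (x, y))"
    by (rule merge_singleton_fun_upd[where g = g, OF assms(1,2) _ assms(3,4)])
qed

end

lemma Ent_PiM_le_sum_integral_bregman:
  fixes M :: "'i \<Rightarrow> 'a measure" and f :: "('i \<Rightarrow> 'a) \<Rightarrow> real"
  assumes "finite I" and "\<And>i. i \<in> I \<Longrightarrow> prob_space (M i)"
    and "integrable (PiM I M) f" "integrable (PiM I M) (\<lambda>x. f x * ln (f x))"
    and "AE x in PiM I M. 0 < f x"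
    and "\<And>j. j \<in> I \<Longrightarrow> integrable (PiM I M) (u j)"
    and "\<And>j. j \<in> I \<Longrightarrow> AE x in PiM I M. 0 < u j x"
    and "\<And>j. j \<in> I \<Longrightarrow> integrable (PiM I M) (\<lambda>x. bregman_xlnx (f x) (u j x))"
    and "\<And>j x z. j \<in> I \<Longrightarrow> x \<in> space (PiM I M) \<Longrightarrow> z \<in> space (M j) \<Longrightarrow> u j (x(j := z)) = u j x"
  shows "Ent (PiM I M) f \<le> (\<Sum>j\<in>I. \<integral>x. bregman_xlnx (f x) (u j x) \<partial>PiM I M)"
  using assms
proof (induction I arbitrary: f u rule: finite_induct)
  case empty
  then show ?case
    by (simp add: Ent_def PiM_empty lebesgue_integral_count_space_finite)
next
  case (insert i I f u)
  interpret PiM_insert M I i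
    by (rule PiM_insert.intro) (use insert.prems(1) insert(1,2) in simp_all)
  have pos: "AE x in PiM (insert i I) M. 0 < f x \<and> 0 < u j x" if "j \<in> insert i I" for j
    using insert.prems(4) insert.prems(6)[OF that] by eventually_elim simp
  note coord_u = coord_integral_bregman[OF insert.prems(2) insert.prems(5) pos insert.prems(7)]
  have "Ent (PiM I M) (coord_integral f)
      \<le> (\<Sum>j\<in>I. \<integral>x. bregman_xlnx (coord_integral f x) (coord_integral (u j) x) \<partial>PiM I M)"
  proof (rule insert.IH[OF _ coord_integral_xlnx[OF insert.prems(2-4)]])
    show "prob_space (M j)" if "j \<in> I" for j
      using insert.prems(1) that by simp
    show "integrable (PiM I M) (coord_integral (u j))" "AE x in PiM I M. 0 < coord_integral (u j) x"
      "integrable (PiM I M) (\<lambda>x. bregman_xlnx (coord_integral f x) (coord_integral (u j) x))"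
      if "j \<in> I" for j
      using coord_u(1-3)[of j] that by simp_all
    show "coord_integral (u j) (x(j := z)) = coord_integral (u j) x"
      if "j \<in> I" "x \<in> space (PiM I M)" "z \<in> space (M j)" for j x z
      using that by (intro coord_integral_fun_upd insert.prems(8)) simp_all
  qed
  also have "\<dots> \<le> (\<Sum>j\<in>I. \<integral>x. bregman_xlnx (f x) (u j x) \<partial>PiM (insert i I) M)"
    using coord_u(4) by (intro sum_mono) simp
  finally have "Ent (PiM I M) (coord_integral f) \<le> (\<Sum>j\<in>I. \<integral>x. bregman_xlnx (f x) (u j x) \<partial>PiM (insert i I) M)" .
  moreover have "Ent (PiM (insert i I) M) f
      \<le> (\<integral>x. bregman_xlnx (f x) (u i x) \<partial>PiM (insert i I) M) + Ent (PiM I M) (coord_integral f)"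
    by (intro Ent_le_coord_integral insert.prems(2,3,7,8) pos) simp_all
  ultimately show ?case
    using insert(1,2) by simp
qed

lemma Ent_PiM_le_sum_nn_integral_bregman:
  fixes M :: "'i \<Rightarrow> 'a measure" and f :: "('i \<Rightarrow> 'a) \<Rightarrow> real"
  assumes "finite I" and prob: "\<And>i. i \<in> I \<Longrightarrow> prob_space (M i)"
    and f: "integrable (PiM I M) f" "integrable (PiM I M) (\<lambda>x. f x * ln (f x))"
      "AE x in PiM I M. 0 < f x"
    and u: "\<And>j. j \<in> I \<Longrightarrow> integrable (PiM I M) (u j)" "\<And>j. j \<in> I \<Longrightarrow> AE x in PiM I M. 0 < u j x"
    and u_upd: "\<And>j x z. j \<in> I \<Longrightarrow> x \<in> space (PiM I M) \<Longrightarrow> z \<in> space (M j) \<Longrightarrow> u j (x(j := z)) = u j x"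
  shows "ennreal (Ent (PiM I M) f) \<le> (\<Sum>j\<in>I. \<integral>\<^sup>+x. ennreal (bregman_xlnx (f x) (u j x)) \<partial>PiM I M)"
proof (cases "\<exists>j\<in>I. (\<integral>\<^sup>+x. ennreal (bregman_xlnx (f x) (u j x)) \<partial>PiM I M) = \<infinity>")
  case True
  then show ?thesis
    using \<open>finite I\<close> by (simp add: ennreal_sum_eq_top[THEN iffD2] del: ennreal_sum_eq_top)
next
  case False
  have nonneg: "AE x in PiM I M. 0 \<le> bregman_xlnx (f x) (u j x)" if "j \<in> I" for j
    using f(3) u(2)[OF that] by eventually_elim (simp add: bregman_xlnx_nonneg)
  have breg: "integrable (PiM I M) (\<lambda>x. bregman_xlnx (f x) (u j x))" if "j \<in> I" for j
    using False f(1) u(1)[OF that] nonneg[OF that] that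
    by (intro integrableI_nonneg) (auto simp: top.not_eq_extremum)
  have "Ent (PiM I M) f \<le> (\<Sum>j\<in>I. \<integral>x. bregman_xlnx (f x) (u j x) \<partial>PiM I M)"
    using \<open>finite I\<close> prob f u breg u_upd by (rule Ent_PiM_le_sum_integral_bregman)
  moreover have "(\<integral>\<^sup>+x. ennreal (bregman_xlnx (f x) (u j x)) \<partial>PiM I M)
      = ennreal (\<integral>x. bregman_xlnx (f x) (u j x) \<partial>PiM I M)" if "j \<in> I" for j
    using breg[OF that] nonneg[OF that] by (rule nn_integral_eq_integral)
  moreover have "0 \<le> (\<integral>x. bregman_xlnx (f x) (u j x) \<partial>PiM I M)" if "j \<in> I" for j
    using nonneg[OF that] by (rule integral_nonneg_AE)
  ultimately show ?thesis
    by (simp add: ennreal_leI)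
qed

lemma Ent_distr:
  assumes [measurable]: "Y \<in> measurable M N" "g \<in> borel_measurable N"
  shows "Ent (distr M N Y) g = Ent M (\<lambda>\<omega>. g (Y \<omega>))"
  by (simp add: Ent_def integral_distr)

lemma (in prob_space) modified_log_sobolev:
  fixes X :: "'i \<Rightarrow> 'a \<Rightarrow> real" and Z :: "('i \<Rightarrow> real) \<Rightarrow> real"
    and Z' :: "'i \<Rightarrow> ('i \<Rightarrow> real) \<Rightarrow> real"
  assumes "finite I" "I \<noteq> {}"
    and X: "\<And>i. i \<in> I \<Longrightarrow> random_variable borel (X i)" and indep: "indep_vars (\<lambda>_. borel) X I"
    and Z: "Z \<in> borel_measurable (PiM I (\<lambda>_. borel))"
    and Z': "\<And>j. j \<in> I \<Longrightarrow> Z' j \<in> borel_measurable (PiM I (\<lambda>_. borel))"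
    and Z'_upd: "\<And>j x t. j \<in> I \<Longrightarrow> Z' j (x(j := t)) = Z' j x"
    and int_Z: "integrable M (\<lambda>\<omega>. exp (Z (\<lambda>i\<in>I. X i \<omega>)))"
      "integrable M (\<lambda>\<omega>. exp (Z (\<lambda>i\<in>I. X i \<omega>)) * Z (\<lambda>i\<in>I. X i \<omega>))"
    and int_Z': "\<And>j. j \<in> I \<Longrightarrow> integrable M (\<lambda>\<omega>. exp (Z' j (\<lambda>i\<in>I. X i \<omega>)))"
  shows "ennreal (Ent M (\<lambda>\<omega>. exp (Z (\<lambda>i\<in>I. X i \<omega>))))
    \<le> (\<Sum>j\<in>I. \<integral>\<^sup>+\<omega>. ennreal (exp (Z (\<lambda>i\<in>I. X i \<omega>)) * phi (Z' j (\<lambda>i\<in>I. X i \<omega>) - Z (\<lambda>i\<in>I. X i \<omega>))) \<partial>M)"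
proof -
  let ?B = "PiM I (\<lambda>_. borel :: real measure)" and ?X = "\<lambda>\<omega>. \<lambda>i\<in>I. X i \<omega>"
  let ?P = "PiM I (\<lambda>i. distr M borel (X i))"
  have X_meas [measurable]: "?X \<in> measurable M ?B"
    using X by (intro measurable_restrict) simp
  have distr_X: "distr M ?B ?X = ?P"
    using indep indep_vars_iff_distr_eq_PiM'[OF \<open>I \<noteq> {}\<close> X] by simp
  have integrable_P: "integrable ?P g" if "g \<in> borel_measurable ?B" "integrable M (\<lambda>\<omega>. g (?X \<omega>))"
    for g :: "_ \<Rightarrow> real"
    using that integrable_distr_eq[OF X_meas that(1)] by (simp add: distr_X)
  note Z [measurable]
  have "ennreal (Ent M (\<lambda>\<omega>. exp (Z (?X \<omega>)))) = ennreal (Ent ?P (\<lambda>x. exp (Z x)))"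
    using Ent_distr[OF X_meas, of "\<lambda>x. exp (Z x)"] by (simp add: distr_X)
  also have "\<dots> \<le> (\<Sum>j\<in>I. \<integral>\<^sup>+x. ennreal (bregman_xlnx (exp (Z x)) (exp (Z' j x))) \<partial>?P)"
  proof (rule Ent_PiM_le_sum_nn_integral_bregman)
    show "prob_space (distr M borel (X i))" if "i \<in> I" for i
      using X that by (intro prob_space_distr) simp
    show "integrable ?P (\<lambda>x. exp (Z x))" "integrable ?P (\<lambda>x. exp (Z x) * ln (exp (Z x)))"
      using int_Z by (simp_all add: integrable_P)
    show "integrable ?P (\<lambda>x. exp (Z' j x))" if "j \<in> I" for j
      using int_Z'[OF that] Z'[OF that] by (intro integrable_P) simp_all
  qed (use \<open>finite I\<close> Z'_upd in simp_all)
  also have "\<dots> = (\<Sum>j\<in>I. \<integral>\<^sup>+\<omega>. ennreal (exp (Z (?X \<omega>)) * phi (Z' j (?X \<omega>) - Z (?X \<omega>))) \<partial>M)"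
  proof (rule sum.cong[OF refl])
    fix j assume "j \<in> I"
    then have [measurable]: "Z' j \<in> borel_measurable ?B"
      by (rule Z')
    show "(\<integral>\<^sup>+x. ennreal (bregman_xlnx (exp (Z x)) (exp (Z' j x))) \<partial>?P)
        = (\<integral>\<^sup>+\<omega>. ennreal (exp (Z (?X \<omega>)) * phi (Z' j (?X \<omega>) - Z (?X \<omega>))) \<partial>M)"
      unfolding bregman_xlnx_exp distr_X[symmetric] by (rule nn_integral_distr[OF X_meas]) measurable
  qed
  finally show ?thesis .
qed

section \<open>Order statistics\<close>

definition kth_largest :: "'i::linorder set \<Rightarrow> ('i \<Rightarrow> 'a::linorder) \<Rightarrow> nat \<Rightarrow> 'a" where
  "kth_largest J v k = rev (sort (map v (sorted_list_of_set J))) ! (k - 1)"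

lemma kth_largest_cong:
  assumes "\<And>j. j \<in> J \<Longrightarrow> v j = w j"
  shows "kth_largest J v k = kth_largest J w k"
proof -
  have "map v (sorted_list_of_set J) = map w (sorted_list_of_set J)"
    using assms by (cases "finite J") auto
  then show ?thesis
    by (simp only: kth_largest_def)
qed

lemma ord_stat_eq_kth_largest: "ord_stat n X k \<omega> = kth_largest {1..n} (\<lambda>i\<in>{1..n}. X i \<omega>) k"
proof -
  have "sorted_list_of_set {1..n} = [1..<n+1]"
    by (metis atLeastLessThanSuc_atLeastAtMost sorted_list_of_set_range Suc_eq_plus1)
  then have "ord_stat n X k \<omega> = kth_largest {1..n} (\<lambda>i. X i \<omega>) k"
    by (simp add: ord_stat_def kth_largest_def)
  also have "\<dots> = kth_largest {1..n} (\<lambda>i\<in>{1..n}. X i \<omega>) k"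
    by (rule kth_largest_cong) simp
  finally show ?thesis .
qed

lemma sorted_nth_ge_iff:
  fixes ys :: "'a::linorder list"
  assumes sorted: "sorted ys" and k: "1 \<le> k" "k \<le> length ys"
  shows "t \<le> ys ! (length ys - k) \<longleftrightarrow> k \<le> length (filter (\<lambda>y. t \<le> y) ys)"
proof -
  define m where "m = length ys - k"
  define S where "S = {i. i < length ys \<and> t \<le> ys ! i}"
  have m: "m < length ys"
    using k by (simp add: m_def)
  have up: "t \<le> ys ! i" if "t \<le> ys ! j" "j \<le> i" "i < length ys" for i j
    using that sorted by (meson order_trans sorted_nth_mono)
  have "t \<le> ys ! m \<longleftrightarrow> k \<le> card S"
  proof
    assume "t \<le> ys ! m"
    then have "{m..<length ys} \<subseteq> S"
      using up by (auto simp: S_def)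
    from card_mono[OF _ this] show "k \<le> card S"
      using k by (simp add: S_def m_def)
  next
    assume card: "k \<le> card S"
    show "t \<le> ys ! m"
    proof (rule ccontr)
      assume not_ge: "\<not> t \<le> ys ! m"
      have "S \<subseteq> {Suc m..<length ys}"
      proof
        fix i assume "i \<in> S"
        then have "i < length ys" "t \<le> ys ! i"
          by (auto simp: S_def)
        moreover have "\<not> i \<le> m"
          using up[of i m] calculation not_ge m by blast
        ultimately show "i \<in> {Suc m..<length ys}"
          by simp
      qed
      from card_mono[OF _ this] show False
        using card k by (simp add: m_def)
    qed
  qed
  then show ?thesis
    by (simp add: S_def m_def length_filter_conv_card)
qed

lemma kth_largest_ge_iff:
  assumes "finite J" "1 \<le> k" "k \<le> card J"
  shows "t \<le> kth_largest J v k \<longleftrightarrow> k \<le> card {j\<in>J. t \<le> v j}"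
proof -
  let ?L = "sorted_list_of_set J"
  let ?ys = "sort (map v ?L)"
  have len: "length ?ys = card J"
    by simp
  have "kth_largest J v k = ?ys ! (length ?ys - k)"
    unfolding kth_largest_def using assms len by (subst rev_nth) (auto simp: Suc_diff_Suc)
  moreover have "length (filter (\<lambda>y. t \<le> y) ?ys) = card {j\<in>J. t \<le> v j}"
  proof -
    have "length (filter (\<lambda>y. t \<le> y) ?ys) = length (filter (\<lambda>j. t \<le> v j) ?L)"
      by (simp add: filter_sort filter_map comp_def)
    also have "\<dots> = card (set (filter (\<lambda>j. t \<le> v j) ?L))"
      using distinct_card[of "filter (\<lambda>j. t \<le> v j) ?L"] by simp
    finally show ?thesis
      using assms(1) by simp
  qed
  ultimately show ?thesis
    using sorted_nth_ge_iff[of ?ys k t] assms len by simp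
qed

lemma kth_largest_Suc_le:
  assumes "finite J" "1 \<le> k" "k < card J"
  shows "kth_largest J v (Suc k) \<le> kth_largest J v k"
  using kth_largest_ge_iff[OF assms(1), of "Suc k" "kth_largest J v (Suc k)" v]
    kth_largest_ge_iff[OF assms(1,2), of "kth_largest J v (Suc k)" v] assms
  by simp

lemma kth_largest_remove:
  assumes J: "finite J" "j \<in> J" and k: "1 \<le> k" "k < card J"
  shows "kth_largest (J - {j}) v k
    = (if kth_largest J v k \<le> v j then kth_largest J v (Suc k) else kth_largest J v k)"
proof -
  define a b where "a = kth_largest J v k" and "b = kth_largest J v (Suc k)"
  define C where "C t = card {i\<in>J. t \<le> v i}" for t
  have a: "t \<le> a \<longleftrightarrow> k \<le> C t" for t
    unfolding a_def C_def using k by (intro kth_largest_ge_iff[OF J(1)]) simp_all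
  have b: "t \<le> b \<longleftrightarrow> Suc k \<le> C t" for t
    unfolding b_def C_def using k by (intro kth_largest_ge_iff[OF J(1)]) simp_all
  have "{i\<in>J - {j}. t \<le> v i} = {i\<in>J. t \<le> v i} - {j}" for t
    by auto
  then have removed: "t \<le> kth_largest (J - {j}) v k \<longleftrightarrow> k \<le> C t - (if t \<le> v j then 1 else 0)" for t
    using kth_largest_ge_iff[of "J - {j}" k t v] J k by (simp add: C_def card_Diff_singleton)
  have "t \<le> kth_largest (J - {j}) v k \<longleftrightarrow> t \<le> (if a \<le> v j then b else a)" for t
  proof (cases "t \<le> v j")
    case True
    have "k < C t" if "\<not> a \<le> v j" "k \<le> C t"
    proof -
      have "insert j {i\<in>J. a \<le> v i} \<subseteq> {i\<in>J. t \<le> v i}"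
        using True that(1) J by auto
      from card_mono[OF _ this] show ?thesis
        using a[of a] that(1) J by (simp add: C_def)
    qed
    moreover have "0 < C t"
      using True J by (auto simp: C_def card_gt_0_iff)
    ultimately show ?thesis
      using True removed[of t] a[of t] b[of t] by auto
  next
    case False
    then show ?thesis
      using removed[of t] a[of t] b[of t] by (auto simp: not_le)
  qed
  from this[of "kth_largest (J - {j}) v k"] this[of "if a \<le> v j then b else a"] show ?thesis
    unfolding a_def b_def by (intro order.antisym) simp_all
qed

lemma kth_largest_remove_le:
  assumes "finite J" "j \<in> J" "1 \<le> k" "k < card J"
  shows "kth_largest (J - {j}) v k \<le> kth_largest J v k"
  using kth_largest_remove[OF assms, of v] kth_largest_Suc_le[OF assms(1,3,4), of v] by simp

lemma kth_largest_Suc_le_remove: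
  assumes "finite J" "j \<in> J" "1 \<le> k" "k < card J"
  shows "kth_largest J v (Suc k) \<le> kth_largest (J - {j}) v k"
  using kth_largest_remove[OF assms, of v] kth_largest_Suc_le[OF assms(1,3,4), of v] by simp

lemma measurable_kth_largest:
  fixes f :: "'a \<Rightarrow> 'i::linorder \<Rightarrow> real"
  assumes "finite J" "1 \<le> k" "k \<le> card J"
    and [measurable]: "\<And>j. j \<in> J \<Longrightarrow> (\<lambda>\<omega>. f \<omega> j) \<in> borel_measurable N"
  shows "(\<lambda>\<omega>. kth_largest J (f \<omega>) k) \<in> borel_measurable N"
proof (rule borel_measurable_iff_ge[THEN iffD2], intro allI)
  fix t
  have "real (card {j\<in>J. t \<le> f \<omega> j}) = (\<Sum>j\<in>J. if t \<le> f \<omega> j then 1 else 0)" for \<omega>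
    using \<open>finite J\<close> by (simp add: sum.If_cases Int_def)
  then have "t \<le> kth_largest J (f \<omega>) k \<longleftrightarrow> real k \<le> (\<Sum>j\<in>J. if t \<le> f \<omega> j then 1 else 0)" for \<omega>
    using kth_largest_ge_iff[OF assms(1-3), of t "f \<omega>"] by (metis of_nat_le_iff)
  then have "{\<omega> \<in> space N. t \<le> kth_largest J (f \<omega>) k}
      = {\<omega> \<in> space N. real k \<le> (\<Sum>j\<in>J. if t \<le> f \<omega> j then 1 else 0)}"
    by blast
  also have "\<dots> \<in> sets N"
    by measurable
  finally show "{\<omega> \<in> space N. t \<le> kth_largest J (f \<omega>) k} \<in> sets N" .
qed

lemma measurable_kth_largest_PiM:
  assumes "finite I" "J \<subseteq> I" "1 \<le> k" "k \<le> card J"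
  shows "(\<lambda>x. kth_largest J x k) \<in> borel_measurable (PiM I (\<lambda>_. borel :: real measure))"
proof (rule measurable_kth_largest[where f = "\<lambda>x. x"])
  show "finite J"
    using assms(2,1) by (rule finite_subset)
  show "(\<lambda>x. x j) \<in> borel_measurable (PiM I (\<lambda>_. borel))" if "j \<in> J" for j
    using that assms(2) by (intro measurable_component_singleton) auto
qed (use assms in simp_all)

lemma sum_exp_phi_kth_largest_upper:
  fixes x :: "'i::linorder \<Rightarrow> real"
  assumes I: "finite I" and k: "1 \<le> k" "k < card I"
  shows "(\<Sum>j\<in>I. exp (l * kth_largest I x k) * phi (l * kth_largest (I - {j}) x k - l * kth_largest I x k))
    \<le> real k * (exp (l * kth_largest I x (Suc k))
                 * zeta (l * (kth_largest I x k - kth_largest I x (Suc k))))"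
proof -
  define a b where "a = kth_largest I x k" and "b = kth_largest I x (Suc k)"
  define T where "T = exp (l * b) * zeta (l * (a - b))"
  have "(\<Sum>j\<in>I. exp (l * a) * phi (l * kth_largest (I - {j}) x k - l * a))
      = (\<Sum>j\<in>I. if a \<le> x j then T else 0)"
  proof (rule sum.cong[OF refl])
    fix j assume "j \<in> I"
    have "kth_largest (I - {j}) x k = (if a \<le> x j then b else a)"
      unfolding a_def b_def using I \<open>j \<in> I\<close> k by (rule kth_largest_remove)
    then show "exp (l * a) * phi (l * kth_largest (I - {j}) x k - l * a) = (if a \<le> x j then T else 0)"
      by (simp add: T_def exp_mult_zeta right_diff_distrib)
  qed
  also have "\<dots> = real (card {j\<in>I. a \<le> x j}) * T"
    using I by (simp add: sum.If_cases Int_def)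
  also have "\<dots> \<le> real k * T"
  proof (cases "card {j\<in>I. a \<le> x j} \<le> k")
    case True
    then show ?thesis
      by (intro mult_right_mono) (simp_all add: T_def zeta_nonneg)
  next
    case False
    then have "a \<le> b"
      using kth_largest_ge_iff[OF I, of "Suc k" a x] k by (simp add: b_def)
    moreover have "b \<le> a"
      unfolding a_def b_def using I k by (rule kth_largest_Suc_le)
    ultimately show ?thesis
      by (simp add: T_def zeta_def phi_def)
  qed
  finally show ?thesis
    by (simp add: a_def b_def T_def)
qed

lemma sum_exp_phi_kth_largest_lower:
  fixes x :: "'i::linorder \<Rightarrow> real"
  assumes I: "finite I" and k: "1 \<le> k" "k < card I"
  shows "(\<Sum>j\<in>I. exp (- l * kth_largest I x (Suc k))
                  * phi (- l * kth_largest (I - {j}) x k - - l * kth_largest I x (Suc k)))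
    \<le> real (card I - k) * (exp (- l * kth_largest I x (Suc k))
                 * phi (- l * (kth_largest I x k - kth_largest I x (Suc k))))"
proof -
  define a c where "a = kth_largest I x (Suc k)" and "c = kth_largest I x k"
  define T where "T = exp (- l * a) * phi (- l * (c - a))"
  have "(\<Sum>j\<in>I. exp (- l * a) * phi (- l * kth_largest (I - {j}) x k - - l * a))
      = (\<Sum>j\<in>I. if \<not> c \<le> x j then T else 0)"
  proof (rule sum.cong[OF refl])
    fix j assume "j \<in> I"
    have "kth_largest (I - {j}) x k = (if c \<le> x j then a else c)"
      unfolding a_def c_def using I \<open>j \<in> I\<close> k by (rule kth_largest_remove)
    then show "exp (- l * a) * phi (- l * kth_largest (I - {j}) x k - - l * a)
        = (if \<not> c \<le> x j then T else 0)"
      by (simp add: T_def algebra_simps)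
  qed
  also have "\<dots> = real (card {j\<in>I. \<not> c \<le> x j}) * T"
    using I by (simp add: sum.If_cases Int_def)
  also have "\<dots> \<le> real (card I - k) * T"
  proof -
    have "k \<le> card {j\<in>I. c \<le> x j}"
      using kth_largest_ge_iff[OF I k(1), of c x] k by (simp add: c_def)
    moreover have "card {j\<in>I. \<not> c \<le> x j} = card I - card {j\<in>I. c \<le> x j}"
      using I by (subst card_Diff_subset[symmetric]) (auto intro: arg_cong[where f = card])
    ultimately show ?thesis
      by (intro mult_right_mono) (simp_all add: T_def phi_nonneg)
  qed
  finally show ?thesis
    by (simp add: a_def c_def T_def)
qed

section \<open>Entropy bounds for order statistics\<close>

lemma sum_nn_integral_le_of_nat_mult:
  assumes "finite J" and f: "\<And>j. j \<in> J \<Longrightarrow> f j \<in> borel_measurable M" "\<And>j x. j \<in> J \<Longrightarrow> 0 \<le> f j x"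
    and g: "g \<in> borel_measurable M" and le: "\<And>x. (\<Sum>j\<in>J. f j x) \<le> real c * g x"
  shows "(\<Sum>j\<in>J. \<integral>\<^sup>+x. ennreal (f j x) \<partial>M) \<le> of_nat c * (\<integral>\<^sup>+x. ennreal (g x) \<partial>M)"
proof -
  have "(\<Sum>j\<in>J. \<integral>\<^sup>+x. ennreal (f j x) \<partial>M) = (\<integral>\<^sup>+x. (\<Sum>j\<in>J. ennreal (f j x)) \<partial>M)"
    using f(1) by (intro nn_integral_sum[symmetric]) simp
  also have "\<dots> \<le> (\<integral>\<^sup>+x. ennreal (real c * g x) \<partial>M)"
    using f(2) le by (intro nn_integral_mono) (simp add: ennreal_leI)
  also have "\<dots> = of_nat c * (\<integral>\<^sup>+x. ennreal (g x) \<partial>M)"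
    using g by (simp add: ennreal_mult' ennreal_of_nat_eq_real_of_nat nn_integral_cmult)
  finally show ?thesis .
qed

lemma (in prob_space) Ent_exp_kth_largest_le:
  fixes X :: "'i::linorder \<Rightarrow> 'a \<Rightarrow> real"
  assumes I: "finite I" and X: "\<And>i. i \<in> I \<Longrightarrow> random_variable borel (X i)"
    and indep: "indep_vars (\<lambda>_. borel) X I"
    and p: "1 \<le> p" "p \<le> card I" and q: "1 \<le> q" "q < card I"
    and le: "\<And>x j. j \<in> I \<Longrightarrow> c * kth_largest (I - {j}) x q \<le> c * kth_largest I x p"
    and G: "G \<in> borel_measurable (PiM I (\<lambda>_. borel))"
    and bound: "\<And>x. (\<Sum>j\<in>I. exp (c * kth_largest I x p)
                  * phi (c * kth_largest (I - {j}) x q - c * kth_largest I x p)) \<le> real m * G x"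
    and int: "integrable M (\<lambda>\<omega>. exp (c * kth_largest I (\<lambda>i\<in>I. X i \<omega>) p))"
      "integrable M (\<lambda>\<omega>. exp (c * kth_largest I (\<lambda>i\<in>I. X i \<omega>) p)
                        * ln (exp (c * kth_largest I (\<lambda>i\<in>I. X i \<omega>) p)))"
  shows "ennreal (Ent M (\<lambda>\<omega>. exp (c * kth_largest I (\<lambda>i\<in>I. X i \<omega>) p)))
    \<le> of_nat m * (\<integral>\<^sup>+\<omega>. ennreal (G (\<lambda>i\<in>I. X i \<omega>)) \<partial>M)"
proof -
  let ?X = "\<lambda>\<omega>. \<lambda>i\<in>I. X i \<omega>"
  have [measurable]: "?X \<in> measurable M (PiM I (\<lambda>_. borel))"
    using X by (intro measurable_restrict) simp
  have Z [measurable]: "(\<lambda>x :: 'i \<Rightarrow> real. kth_largest I x p) \<in> borel_measurable (PiM I (\<lambda>_. borel))"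
    using I p by (intro measurable_kth_largest_PiM) auto
  have Z' [measurable]: "(\<lambda>x :: 'i \<Rightarrow> real. kth_largest (I - {j}) x q) \<in> borel_measurable (PiM I (\<lambda>_. borel))"
    if "j \<in> I" for j
    using I q that by (intro measurable_kth_largest_PiM) auto
  have "ennreal (Ent M (\<lambda>\<omega>. exp (c * kth_largest I (?X \<omega>) p)))
    \<le> (\<Sum>j\<in>I. \<integral>\<^sup>+\<omega>. ennreal (exp (c * kth_largest I (?X \<omega>) p)
        * phi (c * kth_largest (I - {j}) (?X \<omega>) q - c * kth_largest I (?X \<omega>) p)) \<partial>M)"
  proof (rule modified_log_sobolev[OF I _ X indep,
      where Z = "\<lambda>x. c * kth_largest I x p" and Z' = "\<lambda>j x. c * kth_largest (I - {j}) x q"])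
    show "I \<noteq> {}"
      using q I by auto
    show "c * kth_largest (I - {j}) (x(j := t)) q = c * kth_largest (I - {j}) x q" for j x t
      using kth_largest_cong[of "I - {j}" "x(j := t)" x q] by simp
    show "integrable M (\<lambda>\<omega>. exp (c * kth_largest (I - {j}) (?X \<omega>) q))" if "j \<in> I" for j
      using le[OF that] that by (intro Bochner_Integration.integrable_bound[OF int(1)] AE_I2) simp_all
    show "integrable M (\<lambda>\<omega>. exp (c * kth_largest I (?X \<omega>) p))"
      by (rule int(1))
  qed (use int(2) in simp_all)
  also have "\<dots> \<le> of_nat m * (\<integral>\<^sup>+\<omega>. ennreal (G (?X \<omega>)) \<partial>M)"
    using I G bound by (intro sum_nn_integral_le_of_nat_mult) (simp_all add: phi_nonneg)
  finally show ?thesis .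
qed

lemma (in prob_space) Ent_exp_ord_stat_le_zeta:
  fixes X :: "nat \<Rightarrow> 'a \<Rightarrow> real"
  assumes X: "\<And>i. i \<in> {1..n} \<Longrightarrow> random_variable borel (X i)"
    and indep: "indep_vars (\<lambda>_. borel) X {1..n}"
    and k: "1 \<le> k" "k < n" and "0 \<le> l"
    and int: "integrable M (\<lambda>\<omega>. exp (l * ord_stat n X k \<omega>))"
      "integrable M (\<lambda>\<omega>. exp (l * ord_stat n X k \<omega>) * ln (exp (l * ord_stat n X k \<omega>)))"
  shows "ennreal (Ent M (\<lambda>\<omega>. exp (l * ord_stat n X k \<omega>)))
    \<le> of_nat k * (\<integral>\<^sup>+\<omega>. ennreal (exp (l * ord_stat n X (k+1) \<omega>) * zeta (l * spacing n X k \<omega>)) \<partial>M)"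
proof -
  let ?I = "{1..n :: nat}"
  have [measurable]: "(\<lambda>x :: nat \<Rightarrow> real. kth_largest ?I x k) \<in> borel_measurable (PiM ?I (\<lambda>_. borel))"
    "(\<lambda>x :: nat \<Rightarrow> real. kth_largest ?I x (Suc k)) \<in> borel_measurable (PiM ?I (\<lambda>_. borel))"
    using k by (auto intro!: measurable_kth_largest_PiM)
  show ?thesis
    unfolding spacing_def ord_stat_eq_kth_largest Suc_eq_plus1[symmetric]
  proof (rule Ent_exp_kth_largest_le[OF _ X indep])
    show "l * kth_largest (?I - {j}) x k \<le> l * kth_largest ?I x k" if "j \<in> ?I" for x j
      using that k \<open>0 \<le> l\<close> by (intro mult_left_mono kth_largest_remove_le) auto
    show "(\<Sum>j\<in>?I. exp (l * kth_largest ?I x k) * phi (l * kth_largest (?I - {j}) x k - l * kth_largest ?I x k))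
        \<le> real k * (exp (l * kth_largest ?I x (Suc k))
                     * zeta (l * (kth_largest ?I x k - kth_largest ?I x (Suc k))))" for x
      using k by (intro sum_exp_phi_kth_largest_upper) auto
    show "(\<lambda>x. exp (l * kth_largest ?I x (Suc k)) * zeta (l * (kth_largest ?I x k - kth_largest ?I x (Suc k))))
        \<in> borel_measurable (PiM ?I (\<lambda>_. borel))"
      by measurable
  qed (use k int in \<open>simp_all add: ord_stat_eq_kth_largest\<close>)
qed

lemma (in prob_space) Ent_exp_neg_ord_stat_le_phi:
  fixes X :: "nat \<Rightarrow> 'a \<Rightarrow> real"
  assumes X: "\<And>i. i \<in> {1..n} \<Longrightarrow> random_variable borel (X i)"
    and indep: "indep_vars (\<lambda>_. borel) X {1..n}"
    and k: "2 \<le> k" "k \<le> n" and "0 \<le> l"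
    and int: "integrable M (\<lambda>\<omega>. exp (- l * ord_stat n X k \<omega>))"
      "integrable M (\<lambda>\<omega>. exp (- l * ord_stat n X k \<omega>) * ln (exp (- l * ord_stat n X k \<omega>)))"
  shows "ennreal (Ent M (\<lambda>\<omega>. exp (- l * ord_stat n X k \<omega>)))
    \<le> of_nat (n - k + 1)
        * (\<integral>\<^sup>+\<omega>. ennreal (exp (- l * ord_stat n X k \<omega>) * phi (- l * spacing n X (k - 1) \<omega>)) \<partial>M)"
proof -
  let ?I = "{1..n :: nat}"
  obtain m where m: "k = Suc m" "1 \<le> m" "m < n"
    using k by (metis One_nat_def Suc_le_D Suc_le_lessD Suc_le_mono numeral_2_eq_2)
  have [measurable]: "(\<lambda>x :: nat \<Rightarrow> real. kth_largest ?I x m) \<in> borel_measurable (PiM ?I (\<lambda>_. borel))"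
    "(\<lambda>x :: nat \<Rightarrow> real. kth_largest ?I x (Suc m)) \<in> borel_measurable (PiM ?I (\<lambda>_. borel))"
    using m by (auto intro!: measurable_kth_largest_PiM)
  show ?thesis
    unfolding m(1) diff_Suc_1 spacing_def[where j = m, unfolded Suc_eq_plus1[symmetric]] ord_stat_eq_kth_largest
  proof (rule Ent_exp_kth_largest_le[OF _ X indep])
    show "- l * kth_largest (?I - {j}) x m \<le> - l * kth_largest ?I x (Suc m)" if "j \<in> ?I" for x j
      using that m \<open>0 \<le> l\<close> by (intro mult_left_mono_neg kth_largest_Suc_le_remove) auto
    show "(\<Sum>j\<in>?I. exp (- l * kth_largest ?I x (Suc m))
            * phi (- l * kth_largest (?I - {j}) x m - - l * kth_largest ?I x (Suc m)))
        \<le> real (n - Suc m + 1) * (exp (- l * kth_largest ?I x (Suc m))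
                     * phi (- l * (kth_largest ?I x m - kth_largest ?I x (Suc m))))" for x
      using m sum_exp_phi_kth_largest_lower[where I = ?I and k = m and x = x and l = l] by simp
    show "(\<lambda>x. exp (- l * kth_largest ?I x (Suc m)) * phi (- l * (kth_largest ?I x m - kth_largest ?I x (Suc m))))
        \<in> borel_measurable (PiM ?I (\<lambda>_. borel))"
      by measurable
  qed (use m int in \<open>simp_all add: ord_stat_eq_kth_largest\<close>)
qed

theorem proposition1:
  fixes M :: "'a measure" and X :: "nat \<Rightarrow> 'a \<Rightarrow> real" and n :: nat
  assumes "prob_space M"
    and rv: "\<And>i. i \<in> {1..n} \<Longrightarrow> X i \<in> borel_measurable M"
    and indep: "prob_space.indep_vars M (\<lambda>_. borel) X {1..n}"
    and ident: "\<And>i. i \<in> {1..n} \<Longrightarrow> distr M borel (X i) = distr M borel (X 1)"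
    and cont: "\<And>x. measure M {\<omega> \<in> space M. X 1 \<omega> = x} = 0"
  shows
    "(\<forall>l::real. \<forall>k\<in>{1..n-1}. l \<ge> 0 \<longrightarrow>
        integrable M (\<lambda>\<omega>. exp (l * ord_stat n X k \<omega>)) \<longrightarrow>
        integrable M (\<lambda>\<omega>. exp (l * ord_stat n X k \<omega>) * ln (exp (l * ord_stat n X k \<omega>))) \<longrightarrow>
        ennreal (Ent M (\<lambda>\<omega>. exp (l * ord_stat n X k \<omega>)))
          \<le> of_nat k * (\<integral>\<^sup>+\<omega>. ennreal (exp (l * ord_stat n X (k+1) \<omega>)
                                          * zeta (l * spacing n X k \<omega>)) \<partial>M))
   \<and> (\<forall>l::real. \<forall>k\<in>{2..n}. l \<ge> 0 \<longrightarrow>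
        integrable M (\<lambda>\<omega>. exp (- l * ord_stat n X k \<omega>)) \<longrightarrow>
        integrable M (\<lambda>\<omega>. exp (- l * ord_stat n X k \<omega>) * ln (exp (- l * ord_stat n X k \<omega>))) \<longrightarrow>
        ennreal (Ent M (\<lambda>\<omega>. exp (- l * ord_stat n X k \<omega>)))
          \<le> of_nat (n - k + 1) * (\<integral>\<^sup>+\<omega>. ennreal (exp (- l * ord_stat n X k \<omega>)
                                          * phi (- l * spacing n X (k - 1) \<omega>)) \<partial>M))"
proof -
  interpret prob_space M
    by fact
  have X: "\<And>i. i \<in> {1..n} \<Longrightarrow> random_variable borel (X i)"
    using rv by simp
  show ?thesis
    using Ent_exp_ord_stat_le_zeta[OF X indep] Ent_exp_neg_ord_stat_le_phi[OF X indep] by auto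
qed

end
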